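(* Let $G$ be a maximal outerplanar graph of order $n\geq 4$, and let $t$ be the number of vertices of degree $2$ in $G$. Then $\gamma_{\times 2}(G)\leq \lfloor \frac{n+t}{2}\rfloor$ if $t<\frac{n}{3}$, and $\gamma_{\times 2}(G)\leq n-t$ otherwise. *)

theory Defs
  imports Complex_Main
begin

definition simple_graph :: "'a set \<Rightarrow> ('a \<Rightarrow> 'a \<Rightarrow> bool) \<Rightarrow> bool" where
  "simple_graph V E \<longleftrightarrow> finite V \<and>
     (\<forall>u v. E u v \<longrightarrow> u \<in> V \<and> v \<in> V \<and> u \<noteq> v \<and> E v u)"

definition degree :: "'a set \<Rightarrow> ('a \<Rightarrow> 'a \<Rightarrow> bool) \<Rightarrow> 'a \<Rightarrow> nat" where
  "degree V E v = card {u \<in> V. E v u}"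

definition chords_cross :: "nat \<Rightarrow> nat \<Rightarrow> nat \<Rightarrow> nat \<Rightarrow> bool" where
  "chords_cross i j k l \<longleftrightarrow>
     (min i j < k \<and> k < max i j \<and> (l < min i j \<or> max i j < l))"

text \<open>Outerplanar: the vertices can be placed on a circle (in a cyclic order
  given by a bijection onto positions 0..n-1) so that the edges, drawn as
  straight chords, do not cross.\<close>
definition outerplanar :: "'a set \<Rightarrow> ('a \<Rightarrow> 'a \<Rightarrow> bool) \<Rightarrow> bool" where
  "outerplanar V E \<longleftrightarrow> simple_graph V E \<and>
     (\<exists>f. bij_betw f V {0..<card V} \<and>
          (\<forall>a b c d. E a b \<and> E c d \<longrightarrow> \<not> chords_cross (f a) (f b) (f c) (f d)))"

definition add_edge :: "('a \<Rightarrow> 'a \<Rightarrow> bool) \<Rightarrow> 'a \<Rightarrow> 'a \<Rightarrow> 'a \<Rightarrow> 'a \<Rightarrow> bool" where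
  "add_edge E u v = (\<lambda>x y. E x y \<or> (x = u \<and> y = v) \<or> (x = v \<and> y = u))"

definition maximal_outerplanar :: "'a set \<Rightarrow> ('a \<Rightarrow> 'a \<Rightarrow> bool) \<Rightarrow> bool" where
  "maximal_outerplanar V E \<longleftrightarrow> outerplanar V E \<and>
     (\<forall>u\<in>V. \<forall>v\<in>V. u \<noteq> v \<and> \<not> E u v \<longrightarrow> \<not> outerplanar V (add_edge E u v))"

definition double_dominating :: "'a set \<Rightarrow> ('a \<Rightarrow> 'a \<Rightarrow> bool) \<Rightarrow> 'a set \<Rightarrow> bool" where
  "double_dominating V E D \<longleftrightarrow> D \<subseteq> V \<and>
     (\<forall>v\<in>V. card ({u \<in> D. u = v \<or> E v u}) \<ge> 2)"

definition double_domination_number :: "'a set \<Rightarrow> ('a \<Rightarrow> 'a \<Rightarrow> bool) \<Rightarrow> nat" where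
  "double_domination_number V E = (LEAST k. \<exists>D. double_dominating V E D \<and> card D = k)"

end

theory Submission
  imports Defs
begin

(* Place the vertices at positions 0, ..., n - 1 of a circle. A maximal outerplanar graph is then
   a triangulated polygon: every edge (i, j) with j > i + 1 has a unique apex k, i < k < j,
   adjacent to both ends, so the sub-polygon below (i, j) splits into those below (i, k) and
   (k, j), and k has degree 2 exactly when both parts are single sides. By induction along this
   decomposition every sub-polygon has one of four types: lists of demands it meets with sets D
   of interior vertices such that 2 |D| is at most the number of its interior vertices plus the
   number of those of degree 2. Rotating the picture so that a vertex of degree 2 sits at
   position 0 and adding its two neighbours to the set found below the edge (1, n - 1) bounds
   twice the double domination number by n + t. The bound n - t holds because the vertices of
   degree other than 2 double dominate: a vertex of degree 2 has two such neighbours and every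
   other vertex has one. *)

lemma chords_cross_commute: "chords_cross j i k l = chords_cross i j k l"
  unfolding chords_cross_def by (simp add: min.commute max.commute)

lemma chords_cross_swap:
  "chords_cross i j k l \<Longrightarrow> chords_cross k l i j \<or> chords_cross k l j i"
  unfolding chords_cross_def by (auto simp: min_def max_def split: if_splits)

lemma add_mod_if:
  fixes x c n :: nat
  assumes "x < n" "c < n"
  shows "(x + c) mod n = (if x + c < n then x + c else x + c - n)"
  using assms by (simp add: mod_if)

lemma chords_cross_rotate:
  fixes n c :: nat
  assumes "i < n" "j < n" "k < n" "l < n" "c < n"
    and "chords_cross ((i + c) mod n) ((j + c) mod n) ((k + c) mod n) ((l + c) mod n)"
  shows "chords_cross i j k l \<or> chords_cross i j l k"
  using assms unfolding add_mod_if[OF assms(1,5)] add_mod_if[OF assms(2,5)]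
    add_mod_if[OF assms(3,5)] add_mod_if[OF assms(4,5)] chords_cross_def
  by (auto simp: min_def max_def split: if_splits)

lemma bij_betw_rotate:
  fixes n c :: nat
  shows "bij_betw (\<lambda>x. (x + c) mod n) {0..<n} {0..<n}"
proof (cases "n = 0")
  case False
  have "inj_on (\<lambda>x. (x + c mod n) mod n) {0..<n}"
    using False by (intro inj_onI) (auto simp: add_mod_if split: if_splits)
  then have "inj_on (\<lambda>x. (x + c) mod n) {0..<n}"
    by (simp add: mod_add_right_eq)
  moreover have "(\<lambda>x. (x + c) mod n) ` {0..<n} \<subseteq> {0..<n}" using False by auto
  ultimately show ?thesis
    by (simp add: bij_betw_def endo_inj_surj)
qed (simp add: bij_betw_def)

lemma chords_cross_endpoint: "chords_cross i j k l \<Longrightarrow> k \<noteq> i \<and> k \<noteq> j"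
  unfolding chords_cross_def by auto

lemma card_plus_of_bool_le:
  assumes "finite B" "A \<subseteq> B" "P \<Longrightarrow> x \<in> B - A"
  shows "card A + of_bool P \<le> card B"
proof (cases P)
  case True
  have "card (insert x A) \<le> card B" using assms True by (intro card_mono) auto
  then show ?thesis using assms True finite_subset[OF assms(2,1)] by simp
qed (simp add: assms card_mono)

section \<open>Triangulated polygons\<close>

locale triangulated_polygon =
  fixes n :: nat and G :: "nat \<Rightarrow> nat \<Rightarrow> bool"
  assumes edge_less: "G p q \<Longrightarrow> p < n \<and> q < n"
    and edge_neq: "G p q \<Longrightarrow> p \<noteq> q"
    and edge_sym: "G p q \<Longrightarrow> G q p"
    and edges_not_cross: "G a b \<Longrightarrow> G c d \<Longrightarrow> \<not> chords_cross a b c d"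
    and non_edge_crossed:
      "p < n \<Longrightarrow> q < n \<Longrightarrow> p \<noteq> q \<Longrightarrow> \<not> G p q \<Longrightarrow> \<exists>a b. G a b \<and> chords_cross p q a b"
begin

abbreviation deg :: "nat \<Rightarrow> nat" where
  "deg \<equiv> degree {..<n} G"

lemma side_edge: "Suc p < n \<Longrightarrow> G p (Suc p)"
  using non_edge_crossed[of p "Suc p"] unfolding chords_cross_def by fastforce

lemma closing_edge: "2 \<le> n \<Longrightarrow> G 0 (n - 1)"
  using non_edge_crossed[of 0 "n - 1"] edge_less unfolding chords_cross_def by fastforce

lemma neighbour_within_chord:
  assumes "G i j" "i < v" "v < j" "G v u"
  shows "i \<le> u \<and> u \<le> j"
  using edges_not_cross[OF assms(1,4)] assms(2,3) unfolding chords_cross_def by auto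

lemma deg_eq_card: "deg p = card {u. G p u}"
  unfolding degree_def using edge_less by (metis lessThan_iff)

lemma finite_neighbours: "finite {u. G p u}"
  using edge_less by (auto intro: finite_subset[of _ "{..<n}"])

lemma not_ear_if_three_neighbours:
  assumes "G p a" "G p b" "G p c" "a \<noteq> b" "a \<noteq> c" "b \<noteq> c"
  shows "deg p \<noteq> 2"
proof -
  have "card {a, b, c} \<le> deg p"
    unfolding deg_eq_card using assms by (intro card_mono finite_neighbours) auto
  then show ?thesis using assms by simp
qed

lemma ear_neighbours:
  assumes "deg p = 2" "G p a" "G p b" "a \<noteq> b" "G p u"
  shows "u = a \<or> u = b"
proof -
  have "{a, b} = {u. G p u}"
    using assms by (intro card_subset_eq finite_neighbours) (auto simp: deg_eq_card)
  then show ?thesis using assms(5) by auto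
qed

(* k is the last neighbour of i before j; an edge crossing (k, j) would have to leave from i,
   contradicting the choice of k. *)
lemma apex_exists:
  assumes "G i j" "Suc i < j"
  obtains k where "i < k" "k < j" "G i k" "G k j"
proof -
  define K where "K = {k. i < k \<and> k < j \<and> G i k}"
  have "Suc i < n" using assms edge_less[OF assms(1)] by simp
  then have "Suc i \<in> K" unfolding K_def using assms side_edge by auto
  moreover have "finite K" unfolding K_def by (rule finite_subset[of _ "{..<j}"]) auto
  ultimately have "Max K \<in> K" and Max_ge: "\<And>x. x \<in> K \<Longrightarrow> x \<le> Max K"
    using Max_in by auto
  then have k: "i < Max K" "Max K < j" "G i (Max K)" unfolding K_def by auto
  have "G (Max K) j"
  proof (rule ccontr)
    assume "\<not> G (Max K) j"
    then obtain a b where ab: "G a b" "chords_cross (Max K) j a b"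
      using non_edge_crossed[of "Max K" j] k edge_less[OF assms(1)] by auto
    then have a: "Max K < a" "a < j" and b: "b < Max K \<or> j < b"
      using k unfolding chords_cross_def by auto
    consider "b < i \<or> j < b" | "b = i" | "i < b" "b < Max K" using b by linarith
    then show False
    proof cases
      case 1
      then show False using edges_not_cross[OF assms(1) ab(1)] a k unfolding chords_cross_def by auto
    next
      case 2
      then have "a \<in> K" unfolding K_def using a k edge_sym[OF ab(1)] by auto
      then show False using Max_ge a by fastforce
    next
      case 3
      then show False using edges_not_cross[OF k(3) edge_sym[OF ab(1)]] a k unfolding chords_cross_def by auto
    qed
  qed
  then show ?thesis using that k by blast
qed

lemma apex_deg_two_iff:
  assumes "G i k" "G k j" "G i j" "i < k" "k < j"
  shows "deg k = 2 \<longleftrightarrow> k = Suc i \<and> j = Suc k"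
proof
  assume ear: "deg k = 2"
  have "j < n" using edge_less[OF assms(2)] by simp
  then have "G k (k - 1)" "G k (Suc k)"
    using side_edge[of "k - 1"] side_edge[of k] edge_sym assms(4,5) by auto
  then show "k = Suc i \<and> j = Suc k"
    using ear_neighbours[OF ear edge_sym[OF assms(1)] assms(2)] assms(4,5) by fastforce
next
  assume "k = Suc i \<and> j = Suc k"
  then have "{u. G k u} = {i, j}"
    using neighbour_within_chord[OF assms(3,4,5)] edge_neq assms edge_sym by fastforce
  then show "deg k = 2" unfolding deg_eq_card using assms by simp
qed

lemma ear_below_chord:
  assumes "G i j" "Suc i < j"
  shows "\<exists>k. i < k \<and> k < j \<and> deg k = 2"
  using assms
proof (induction "j - i" arbitrary: i j rule: less_induct)
  case less
  obtain k where k: "i < k" "k < j" "G i k" "G k j" using apex_exists[OF less.prems] .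
  consider "k = Suc i \<and> j = Suc k" | "Suc i < k" | "Suc k < j" using k(1,2) by linarith
  then show ?case
  proof cases
    case 1
    then show ?thesis using apex_deg_two_iff[OF k(3,4) less.prems(1) k(1,2)] k by blast
  next
    case 2
    have "k - i < j - i" using k by linarith
    then obtain k' where "i < k'" "k' < k" "deg k' = 2" using less.hyps[of k i] k 2 by blast
    then show ?thesis using k(2) by (intro exI[of _ k']) simp
  next
    case 3
    have "j - k < j - i" using k by linarith
    then obtain k' where "k < k'" "k' < j" "deg k' = 2" using less.hyps[of j k] k 3 by blast
    then show ?thesis using k(1) by (intro exI[of _ k']) simp
  qed
qed

lemma ear_exists:
  assumes "3 \<le> n"
  shows "\<exists>p<n. deg p = 2"
proof -
  have "G 0 (n - 1)" "Suc 0 < n - 1" using closing_edge assms by auto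
  then obtain k where "k < n - 1" "deg k = 2" using ear_below_chord by blast
  then show ?thesis by (intro exI[of _ k]) simp
qed

lemma ear_at_0:
  assumes "4 \<le> n" "deg 0 = 2"
  shows "G 1 (n - 1)" "deg 1 \<noteq> 2" "deg (n - 1) \<noteq> 2"
proof -
  have G01: "G 0 1" and G0n: "G 0 (n - 1)" using side_edge[of 0] closing_edge assms(1) by auto
  have "Suc 0 < n - 1" using assms(1) by simp
  then obtain k where k: "0 < k" "k < n - 1" "G 0 k" "G k (n - 1)"
    using apex_exists[OF G0n] by blast
  then have "k = 1" using ear_neighbours[OF assms(2) G01 G0n] by force
  with k show G1n: "G 1 (n - 1)" by simp
  have "G 1 2" using side_edge[of 1] assms(1) by (simp add: numeral_2_eq_2)
  then show "deg 1 \<noteq> 2"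
    using not_ear_if_three_neighbours[OF edge_sym[OF G01] _ G1n] assms(1) by force
  have "Suc (n - 2) = n - 1" using assms(1) by simp
  then have "G (n - 2) (n - 1)" using side_edge[of "n - 2"] assms(1) by simp
  then show "deg (n - 1) \<noteq> 2"
    using not_ear_if_three_neighbours[OF edge_sym[OF G0n] edge_sym edge_sym[OF G1n]] assms(1)
    by force
qed

lemma non_ear_neighbour_at_0:
  assumes "4 \<le> n" "deg 0 \<noteq> 2"
  obtains q where "G 0 q" "deg q \<noteq> 2"
proof (cases "deg 1 = 2")
  case False
  then show ?thesis using that side_edge[of 0] assms(1) by simp
next
  case True
  have G10: "G 1 0" and G12: "G 1 2"
    using side_edge[of 0] side_edge[of 1] edge_sym assms(1) by (auto simp: numeral_2_eq_2)
  have G02: "G 0 2"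
  proof (rule ccontr)
    assume "\<not> G 0 2"
    then obtain a b where ab: "G a b" "chords_cross 0 2 a b"
      using non_edge_crossed[of 0 2] assms(1) by auto
    then have "a = 1" "2 < b" unfolding chords_cross_def by auto
    then show False using ear_neighbours[OF True G10 G12, of b] ab(1) by auto
  qed
  have "G 2 3" using side_edge[of 2] assms(1) by (simp add: numeral_3_eq_3 numeral_2_eq_2)
  then have "deg 2 \<noteq> 2"
    using not_ear_if_three_neighbours[OF edge_sym[OF G12] _ edge_sym[OF G02]] by force
  then show ?thesis using that G02 by blast
qed

lemma non_ears_dominate_0:
  assumes "4 \<le> n"
  shows "2 \<le> card {u \<in> {p \<in> {..<n}. deg p \<noteq> 2}. u = 0 \<or> G 0 u}"
proof (cases "deg 0 = 2")
  case True
  have "G 0 1" "G 0 (n - 1)" using side_edge[of 0] closing_edge assms by auto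
  then have "{1, n - 1} \<subseteq> {u \<in> {p \<in> {..<n}. deg p \<noteq> 2}. u = 0 \<or> G 0 u}"
    using ear_at_0[OF assms True] assms by auto
  from card_mono[OF _ this] show ?thesis using assms by simp
next
  case False
  obtain q where q: "G 0 q" "deg q \<noteq> 2" using non_ear_neighbour_at_0[OF assms False] .
  then have "{0, q} \<subseteq> {u \<in> {p \<in> {..<n}. deg p \<noteq> 2}. u = 0 \<or> G 0 u}"
    using False edge_less assms by auto
  from card_mono[OF _ this] show ?thesis using edge_neq[OF q(1)] by simp
qed

section \<open>Double domination below a chord\<close>

definition ears_between :: "nat \<Rightarrow> nat \<Rightarrow> nat" where
  "ears_between i j = card {v \<in> {i<..<j}. deg v = 2}"

lemma ears_between_split:
  assumes "i < k" "k < j"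
  shows "ears_between i j = ears_between i k + ears_between k j + of_bool (deg k = 2)"
proof -
  have "{v \<in> {i<..<j}. deg v = 2} =
      {v \<in> {i<..<k}. deg v = 2} \<union> {v \<in> {k<..<j}. deg v = 2} \<union> {v \<in> {k}. deg v = 2}"
    using assms by auto
  moreover have "{v \<in> {k}. deg v = 2} = (if deg k = 2 then {k} else {})" by auto
  ultimately show ?thesis unfolding ears_between_def
    by (simp add: card_Un_disjoint disjoint_iff)
qed

(* D lies strictly inside the chord (i, j) and double dominates the interior, where dx and dy
   say whether i and j are counted as members of the final set; besides, D supplies at least
   rx neighbours to i and ry to j. *)
definition chord_cover :: "nat \<Rightarrow> nat \<Rightarrow> bool \<Rightarrow> bool \<Rightarrow> nat \<Rightarrow> nat \<Rightarrow> nat set \<Rightarrow> bool" where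
  "chord_cover i j dx dy rx ry D \<longleftrightarrow> D \<subseteq> {i<..<j} \<and>
     (\<forall>v \<in> {i<..<j}.
        2 \<le> card {u \<in> D. u = v \<or> G v u} + of_bool (dx \<and> G v i) + of_bool (dy \<and> G v j)) \<and>
     rx \<le> card {u \<in> D. G i u} \<and> ry \<le> card {u \<in> D. G j u}"

lemma chord_cover_mono:
  assumes "chord_cover i j dx dy rx ry D" "dx \<longrightarrow> dx'" "dy \<longrightarrow> dy'" "rx' \<le> rx" "ry' \<le> ry"
  shows "chord_cover i j dx' dy' rx' ry' D"
proof -
  have "2 \<le> card {u \<in> D. u = v \<or> G v u} + of_bool (dx' \<and> G v i) + of_bool (dy' \<and> G v j)"
    if "v \<in> {i<..<j}" for v
  proof -
    have "of_bool (dx \<and> G v i) \<le> (of_bool (dx' \<and> G v i) :: nat)"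
      and "of_bool (dy \<and> G v j) \<le> (of_bool (dy' \<and> G v j) :: nat)"
      using assms(2,3) by auto
    moreover have "2 \<le> card {u \<in> D. u = v \<or> G v u} + of_bool (dx \<and> G v i) + of_bool (dy \<and> G v j)"
      using assms(1) that unfolding chord_cover_def by blast
    ultimately show ?thesis by linarith
  qed
  then show ?thesis using assms(1,4,5) unfolding chord_cover_def by auto
qed

lemma card_Un_apex:
  fixes k :: nat
  assumes "DL \<subseteq> {i<..<k}" "DR \<subseteq> {k<..<j}"
  shows "card (DL \<union> DR \<union> (if dk then {k} else {})) = card DL + card DR + of_bool dk"
proof -
  have "finite DL" "finite DR" using assms by (auto intro: finite_subset)
  moreover have "DL \<inter> DR = {}" "k \<notin> DL \<union> DR" using assms by fastforce+
  ultimately show ?thesis by (simp add: card_Un_disjoint)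
qed

lemma chord_cover_join:
  assumes "i < k" "k < j" "G i k" "G k j"
    and L: "chord_cover i k dx dk rx rk DL" and R: "chord_cover k j dk dy rk' ry DR"
    and apex: "2 \<le> rk + rk' + of_bool dk + of_bool dx + of_bool dy"
  shows "chord_cover i j dx dy (rx + of_bool dk) (ry + of_bool dk) (DL \<union> DR \<union> (if dk then {k} else {}))"
proof -
  define D where "D = DL \<union> DR \<union> (if dk then {k} else {})"
  have DL: "DL \<subseteq> {i<..<k}" and DR: "DR \<subseteq> {k<..<j}" using L R unfolding chord_cover_def by auto
  then have fin: "finite D" unfolding D_def by (auto intro: finite_subset)
  have k_notin: "k \<notin> DL \<union> DR" and disj: "DL \<inter> DR = {}" using DL DR by fastforce+
  have plus_k: "card {u \<in> S. u = v \<or> G v u} + of_bool (dk \<and> G v k) \<le> card {u \<in> D. u = v \<or> G v u}"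
    if "S \<subseteq> DL \<union> DR" for S v
    using fin that k_notin by (intro card_plus_of_bool_le) (auto simp: D_def)
  have "2 \<le> card {u \<in> D. u = v \<or> G v u} + of_bool (dx \<and> G v i) + of_bool (dy \<and> G v j)"
    if v: "v \<in> {i<..<j}" for v
  proof -
    consider "v < k" | "v = k" | "k < v" by linarith
    then show ?thesis
    proof cases
      case 1
      then have "2 \<le> card {u \<in> DL. u = v \<or> G v u} + of_bool (dx \<and> G v i) + of_bool (dk \<and> G v k)"
        using L v unfolding chord_cover_def by auto
      then show ?thesis using plus_k[OF Un_upper1, of v] by linarith
    next
      case 3
      then have "2 \<le> card {u \<in> DR. u = v \<or> G v u} + of_bool (dk \<and> G v k) + of_bool (dy \<and> G v j)"
        using R v unfolding chord_cover_def by auto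
      then show ?thesis using plus_k[OF Un_upper2, of v] by linarith
    next
      case 2
      have "card ({u \<in> DL. G k u} \<union> {u \<in> DR. G k u}) + of_bool dk \<le> card {u \<in> D. u = v \<or> G v u}"
        using fin DL DR 2 by (intro card_plus_of_bool_le) (auto simp: D_def)
      moreover have "card ({u \<in> DL. G k u} \<union> {u \<in> DR. G k u}) = card {u \<in> DL. G k u} + card {u \<in> DR. G k u}"
        using DL DR disj by (intro card_Un_disjoint) (auto intro: finite_subset)
      moreover have "rk \<le> card {u \<in> DL. G k u}" "rk' \<le> card {u \<in> DR. G k u}"
        using L R unfolding chord_cover_def by auto
      moreover have "G k i" using \<open>G i k\<close> edge_sym by blast
      ultimately show ?thesis using apex 2 \<open>G k j\<close> by simp
    qed
  qed
  moreover have "card {u \<in> DL. G i u} + of_bool dk \<le> card {u \<in> D. G i u}"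
    using fin DL DR \<open>G i k\<close> by (intro card_plus_of_bool_le) (auto simp: D_def)
  moreover have "card {u \<in> DR. G j u} + of_bool dk \<le> card {u \<in> D. G j u}"
    using fin DL DR \<open>G k j\<close> edge_sym by (intro card_plus_of_bool_le) (auto simp: D_def)
  moreover have "D \<subseteq> {i<..<j}" using DL DR \<open>i < k\<close> \<open>k < j\<close> unfolding D_def by auto
  ultimately show ?thesis using L R unfolding chord_cover_def D_def by fastforce
qed

end

(* A demand (dx, dy, rx, ry, c) asks for a chord_cover D with these parameters such that
   2 |D| + c <= (number of interior vertices) + (number of interior vertices of degree 2). *)
type_synonym demand = "bool \<times> bool \<times> nat \<times> nat \<times> nat"

(* Demands dL below (i, k) and dR below (k, j) yield d below (i, j). The apex k is taken into
   the set iff dk; it adds one interior vertex, and one interior vertex of degree 2 when ear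
   holds, i.e. when both parts are sides of the polygon. *)
definition joins :: "bool \<Rightarrow> demand \<Rightarrow> demand \<Rightarrow> demand \<Rightarrow> bool" where
  "joins ear = (\<lambda>(dxL, dkL, rxL, rkL, cL) (dkR, dyR, rkR, ryR, cR) (dx, dy, rx, ry, c).
     \<exists>dk. (dxL \<longrightarrow> dx) \<and> (dkL \<longrightarrow> dk) \<and> (dkR \<longrightarrow> dk) \<and> (dyR \<longrightarrow> dy) \<and>
       rx \<le> rxL + of_bool dk \<and> ry \<le> ryR + of_bool dk \<and>
       2 \<le> rkL + rkR + of_bool dk + of_bool dx + of_bool dy \<and>
       2 * of_bool dk + c \<le> cL + cR + 1 + of_bool ear)"

(* Demands only ever get easier as dx, dy grow and rx, ry, c shrink, so each type lists its
   minimal demands. A side (i, i + 1) of the polygon meets side_type; every proper sub-polygon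
   meets one of the chord_types, and chord_types_join checks by simplification that gluing two
   such parts again yields one of the chord_types. *)
definition side_type :: "demand list" where
  "side_type = [(False, False, 0, 0, 0)]"

definition chord_types :: "demand list list" where
  "chord_types =
    [[(False, False, 0, 0, 0), (False, True, 1, 1, 0), (True, False, 1, 1, 0)],
     [(False, True, 0, 1, 1)],
     [(True, False, 1, 0, 1)],
     [(True, True, 0, 0, 2)]]"

lemma chord_types_join:
  assumes "TL \<in> set (side_type # chord_types)" "TR \<in> set (side_type # chord_types)"
  shows "\<exists>T \<in> set chord_types. \<forall>d \<in> set T. \<exists>dL \<in> set TL. \<exists>dR \<in> set TR.
           joins (TL = side_type \<and> TR = side_type) dL dR d"
  using assms unfolding chord_types_def side_type_def
  by (simp add: joins_def ex_bool_eq) (elim disjE; simp)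

context triangulated_polygon
begin

definition achievable :: "nat \<Rightarrow> nat \<Rightarrow> demand \<Rightarrow> bool" where
  "achievable i j = (\<lambda>(dx, dy, rx, ry, c). \<exists>D. chord_cover i j dx dy rx ry D \<and>
     2 * card D + c \<le> (j - i - 1) + ears_between i j)"

lemma achievable_side: "d \<in> set side_type \<Longrightarrow> achievable i (Suc i) d"
  unfolding side_type_def achievable_def chord_cover_def by auto

lemma achievable_weakest:
  assumes "achievable i j d"
  shows "achievable i j (True, True, 0, 0, 0)"
proof -
  obtain dx dy rx ry c where "d = (dx, dy, rx, ry, c)" by (cases d) auto
  with assms obtain D where "chord_cover i j dx dy rx ry D" "2 * card D + c \<le> (j - i - 1) + ears_between i j"
    unfolding achievable_def by auto
  then show ?thesis unfolding achievable_def by (auto intro: chord_cover_mono)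
qed

lemma achievable_join:
  assumes ik: "i < k" and kj: "k < j" and "G i k" "G k j" "G i j"
    and L: "achievable i k dL" and R: "achievable k j dR"
    and join: "joins (k = Suc i \<and> j = Suc k) dL dR d"
  shows "achievable i j d"
proof -
  obtain dxL dkL rxL rkL cL where dL: "dL = (dxL, dkL, rxL, rkL, cL)" by (cases dL) auto
  obtain dkR dyR rkR ryR cR where dR: "dR = (dkR, dyR, rkR, ryR, cR)" by (cases dR) auto
  obtain dx dy rx ry c where d: "d = (dx, dy, rx, ry, c)" by (cases d) auto
  obtain dk where dk: "dxL \<longrightarrow> dx" "dkL \<longrightarrow> dk" "dkR \<longrightarrow> dk" "dyR \<longrightarrow> dy"
      "rx \<le> rxL + of_bool dk" "ry \<le> ryR + of_bool dk"
      "2 \<le> rkL + rkR + of_bool dk + of_bool dx + of_bool dy"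
      "2 * of_bool dk + c \<le> cL + cR + 1 + of_bool (k = Suc i \<and> j = Suc k)"
    using join unfolding joins_def dL dR d by auto
  obtain DL where DL: "chord_cover i k dxL dkL rxL rkL DL"
      "2 * card DL + cL \<le> (k - i - 1) + ears_between i k"
    using L unfolding achievable_def dL by auto
  obtain DR where DR: "chord_cover k j dkR dyR rkR ryR DR"
      "2 * card DR + cR \<le> (j - k - 1) + ears_between k j"
    using R unfolding achievable_def dR by auto
  define D where "D = DL \<union> DR \<union> (if dk then {k} else {})"
  have L': "chord_cover i k dx dk rxL rkL DL" and R': "chord_cover k j dk dy rkR ryR DR"
    using chord_cover_mono DL(1) DR(1) dk(1-4) by auto
  have "chord_cover i j dx dy rx ry D"
    using chord_cover_mono[OF chord_cover_join[OF ik kj \<open>G i k\<close> \<open>G k j\<close> L' R' dk(7)]] dk(5,6)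
    unfolding D_def by auto
  moreover have "card D = card DL + card DR + of_bool dk"
    using card_Un_apex L' R' unfolding D_def chord_cover_def by blast
  moreover have "ears_between i j = ears_between i k + ears_between k j + of_bool (k = Suc i \<and> j = Suc k)"
    using ears_between_split[OF ik kj] apex_deg_two_iff[OF \<open>G i k\<close> \<open>G k j\<close> \<open>G i j\<close> ik kj] by simp
  ultimately have "2 * card D + c \<le> (j - i - 1) + ears_between i j"
    using DL(2) DR(2) dk(8) ik kj by linarith
  with \<open>chord_cover i j dx dy rx ry D\<close> show ?thesis unfolding achievable_def d by auto
qed

lemma chord_type:
  assumes "G i j" "Suc i < j"
  shows "\<exists>T \<in> set chord_types. \<forall>d \<in> set T. achievable i j d"
  using assms
proof (induction "j - i" arbitrary: i j rule: less_induct)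
  case less
  obtain k where k: "i < k" "k < j" "G i k" "G k j" using apex_exists[OF less.prems] .
  have side_not_chord: "side_type \<notin> set chord_types" by (simp add: side_type_def chord_types_def)
  obtain TL where TL: "TL \<in> set (side_type # chord_types)" "TL = side_type \<longleftrightarrow> k = Suc i"
      "\<forall>d \<in> set TL. achievable i k d"
  proof (cases "k = Suc i")
    case True
    then show ?thesis using that[of side_type] achievable_side by auto
  next
    case False
    have "k - i < j - i" "Suc i < k" using k False by linarith+
    then obtain T where "T \<in> set chord_types" "\<forall>d \<in> set T. achievable i k d"
      using less.hyps[of k i] k by blast
    then show ?thesis using that[of T] side_not_chord False by auto
  qed
  obtain TR where TR: "TR \<in> set (side_type # chord_types)" "TR = side_type \<longleftrightarrow> j = Suc k"
      "\<forall>d \<in> set TR. achievable k j d"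
  proof (cases "j = Suc k")
    case True
    then show ?thesis using that[of side_type] achievable_side by auto
  next
    case False
    have "j - k < j - i" "Suc k < j" using k False by linarith+
    then obtain T where "T \<in> set chord_types" "\<forall>d \<in> set T. achievable k j d"
      using less.hyps[of j k] k by blast
    then show ?thesis using that[of T] side_not_chord False by auto
  qed
  from chord_types_join[OF TL(1) TR(1)] obtain T where "T \<in> set chord_types"
    and "\<forall>d \<in> set T. \<exists>dL \<in> set TL. \<exists>dR \<in> set TR. joins (k = Suc i \<and> j = Suc k) dL dR d"
    using TL(2) TR(2) by auto
  then show ?case
    using achievable_join[OF k less.prems(1)] TL(3) TR(3) by blast
qed

lemma double_dominating_close_ear:
  assumes n4: "4 \<le> n" and ear: "deg 0 = 2" and D0: "chord_cover 1 (n - 1) True True 0 0 D0"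
  shows "double_dominating {..<n} G (insert 1 (insert (n - 1) D0))"
proof -
  define D where "D = insert 1 (insert (n - 1) D0)"
  have G01: "G 0 1" and G0n: "G 0 (n - 1)" and G1n: "G 1 (n - 1)"
    using side_edge[of 0] closing_edge ear_at_0(1)[OF n4 ear] n4 by auto
  have D0_sub: "D0 \<subseteq> {1<..<n - 1}" using D0 unfolding chord_cover_def by blast
  then have fin: "finite D" unfolding D_def by (auto intro: finite_subset)
  have "2 \<le> card {u \<in> D. u = v \<or> G v u}" if v: "v < n" for v
  proof -
    consider "v \<in> {0, 1, n - 1}" | "v \<in> {1<..<n - 1}" using v by fastforce
    then show ?thesis
    proof cases
      case 1
      then have "{1, n - 1} \<subseteq> {u \<in> D. u = v \<or> G v u}"
        using G01 G0n G1n edge_sym unfolding D_def by auto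
      from card_mono[OF fin[THEN finite_subset[rotated], of "{u \<in> D. u = v \<or> G v u}"] this]
      show ?thesis using n4 by simp
    next
      case 2
      have "2 \<le> card {u \<in> D0. u = v \<or> G v u} + of_bool (G v 1) + of_bool (G v (n - 1))"
        using D0 2 unfolding chord_cover_def by auto
      also have "card {u \<in> D0. u = v \<or> G v u} + of_bool (G v 1)
          \<le> card {u \<in> insert 1 D0. u = v \<or> G v u}"
        using D0_sub fin by (intro card_plus_of_bool_le) (auto simp: D_def)
      also have "card {u \<in> insert 1 D0. u = v \<or> G v u} + of_bool (G v (n - 1))
          \<le> card {u \<in> D. u = v \<or> G v u}"
        using D0_sub fin 2 by (intro card_plus_of_bool_le) (auto simp: D_def)
      finally show ?thesis by simp
    qed
  qed
  moreover have "D \<subseteq> {..<n}" unfolding D_def using D0_sub n4 by force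
  ultimately show ?thesis unfolding double_dominating_def D_def by auto
qed

lemma double_dominating_from_ear:
  assumes n4: "4 \<le> n" and ear: "deg 0 = 2"
  shows "\<exists>D. double_dominating {..<n} G D \<and> 2 * card D \<le> n + card {p \<in> {..<n}. deg p = 2}"
proof -
  have "G 1 (n - 1)" "Suc 1 < n - 1" using ear_at_0(1)[OF n4 ear] n4 by auto
  then obtain T where "T \<in> set chord_types" "\<forall>d \<in> set T. achievable 1 (n - 1) d"
    using chord_type by blast
  then have "achievable 1 (n - 1) (True, True, 0, 0, 0)"
    using achievable_weakest by (auto simp: chord_types_def)
  then obtain D0 where D0: "chord_cover 1 (n - 1) True True 0 0 D0"
      "2 * card D0 \<le> (n - 3) + ears_between 1 (n - 1)"
    unfolding achievable_def by auto
  have D0_sub: "D0 \<subseteq> {1<..<n - 1}" using D0(1) unfolding chord_cover_def by blast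
  then have "finite D0" "1 \<notin> D0" "n - 1 \<notin> D0" by (auto intro: finite_subset)
  then have "card (insert 1 (insert (n - 1) D0)) = card D0 + 2" using n4 by simp
  moreover have "ears_between 1 (n - 1) + 1 \<le> card {p \<in> {..<n}. deg p = 2}"
  proof -
    have "insert 0 {v \<in> {1<..<n - 1}. deg v = 2} \<subseteq> {p \<in> {..<n}. deg p = 2}"
      using ear n4 by auto
    from card_mono[OF _ this] show ?thesis unfolding ears_between_def by simp
  qed
  ultimately show ?thesis
    using double_dominating_close_ear[OF n4 ear D0(1)] D0(2) n4 by (intro exI) auto
qed

end

section \<open>Maximal outerplanar graphs as triangulated polygons\<close>

definition circle_embedding :: "'a set \<Rightarrow> ('a \<Rightarrow> 'a \<Rightarrow> bool) \<Rightarrow> ('a \<Rightarrow> nat) \<Rightarrow> bool" where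
  "circle_embedding V E f \<longleftrightarrow> bij_betw f V {0..<card V} \<and>
     (\<forall>a b c d. E a b \<and> E c d \<longrightarrow> \<not> chords_cross (f a) (f b) (f c) (f d))"

lemma outerplanar_iff: "outerplanar V E \<longleftrightarrow> simple_graph V E \<and> (\<exists>f. circle_embedding V E f)"
  unfolding outerplanar_def circle_embedding_def by blast

lemma circle_embedding_rotate:
  assumes "simple_graph V E" "circle_embedding V E f" "c < card V"
  shows "circle_embedding V E (\<lambda>x. (f x + c) mod card V)"
proof -
  have bij: "bij_betw f V {0..<card V}" using assms(2) unfolding circle_embedding_def by blast
  have "bij_betw ((\<lambda>x. (x + c) mod card V) \<circ> f) V {0..<card V}"
    using bij_betw_trans[OF bij bij_betw_rotate] .
  moreover have "\<not> chords_cross ((f a + c) mod card V) ((f b + c) mod card V)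
      ((f a' + c) mod card V) ((f b' + c) mod card V)" if "E a b" "E a' b'" for a b a' b'
  proof
    assume "chords_cross ((f a + c) mod card V) ((f b + c) mod card V)
      ((f a' + c) mod card V) ((f b' + c) mod card V)"
    moreover have "a \<in> V" "b \<in> V" "a' \<in> V" "b' \<in> V" "E b' a'"
      using assms(1) that unfolding simple_graph_def by auto
    then have "f a < card V" "f b < card V" "f a' < card V" "f b' < card V"
      using bij unfolding bij_betw_def by auto
    ultimately have "chords_cross (f a) (f b) (f a') (f b') \<or> chords_cross (f a) (f b) (f b') (f a')"
      using chords_cross_rotate assms(3) by blast
    then show False
      using assms(2) that \<open>E b' a'\<close> unfolding circle_embedding_def by blast
  qed
  ultimately show ?thesis unfolding circle_embedding_def comp_def by blast
qed

lemma circle_embedding_at_vertex: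
  assumes "simple_graph V E" "circle_embedding V E f" "v \<in> V"
  obtains g where "circle_embedding V E g" "g v = 0"
proof (cases "f v = 0")
  case False
  have "f v < card V" using assms(2,3) unfolding circle_embedding_def bij_betw_def by auto
  then have "card V - f v < card V" "(f v + (card V - f v)) mod card V = 0" using False by auto
  then show ?thesis using that[OF circle_embedding_rotate[OF assms(1,2)]] by simp
qed (use assms that in blast)

lemma circle_embedding_add_edge:
  assumes "simple_graph V E" "circle_embedding V E f"
    and uncrossed: "\<And>a b. E a b \<Longrightarrow> \<not> chords_cross (f u) (f v) (f a) (f b)"
  shows "circle_embedding V (add_edge E u v) f"
proof -
  have sym: "E a b \<Longrightarrow> E b a" for a b using assms(1) unfolding simple_graph_def by blast
  have new_old: "\<not> chords_cross (f a) (f b) (f c) (f d)"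
    if "a = u \<and> b = v \<or> a = v \<and> b = u" "E c d" for a b c d
    using uncrossed[OF that(2)] that(1) chords_cross_commute[of "f u" "f v"] by auto
  have "\<not> chords_cross (f a) (f b) (f c) (f d)"
    if ab: "add_edge E u v a b" and cd: "add_edge E u v c d" for a b c d
  proof
    assume cross: "chords_cross (f a) (f b) (f c) (f d)"
    then have swapped: "chords_cross (f c) (f d) (f a) (f b) \<or> chords_cross (f c) (f d) (f b) (f a)"
      by (rule chords_cross_swap)
    consider "E a b" "E c d" | "E a b" "c = u \<and> d = v \<or> c = v \<and> d = u"
      | "a = u \<and> b = v \<or> a = v \<and> b = u" "E c d"
      | "a = u \<and> b = v \<or> a = v \<and> b = u" "c = u \<and> d = v \<or> c = v \<and> d = u"
      using ab cd unfolding add_edge_def by blast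
    then show False
    proof cases
      case 1
      then show False using assms(2) cross unfolding circle_embedding_def by blast
    next
      case 2
      then show False using swapped new_old sym by blast
    next
      case 3
      then show False using cross new_old by blast
    next
      case 4
      then show False using chords_cross_endpoint[OF cross] by auto
    qed
  qed
  then show ?thesis using assms(2) unfolding circle_embedding_def by blast
qed

lemma maximal_outerplanar_polygon:
  assumes mo: "maximal_outerplanar V E" and emb: "circle_embedding V E f"
  defines "h \<equiv> inv_into V f"
  shows "triangulated_polygon (card V) (\<lambda>p q. p < card V \<and> q < card V \<and> E (h p) (h q))"
proof
  let ?n = "card V" and ?G = "\<lambda>p q. p < card V \<and> q < card V \<and> E (h p) (h q)"
  have sg: "simple_graph V E" using mo unfolding maximal_outerplanar_def outerplanar_def by blast
  have bij: "bij_betw f V {0..<?n}" using emb unfolding circle_embedding_def by blast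
  have h_in: "h p \<in> V" and f_h: "f (h p) = p" if "p < ?n" for p
    using that bij unfolding h_def bij_betw_def by (auto intro: inv_into_into f_inv_into_f)
  have G_f: "?G (f a) (f b)" if "E a b" for a b
    using that sg bij unfolding simple_graph_def h_def bij_betw_def by auto
  show "?G p q \<Longrightarrow> p < ?n \<and> q < ?n" for p q by blast
  show "?G p q \<Longrightarrow> p \<noteq> q" for p q using sg unfolding simple_graph_def by blast
  show "?G p q \<Longrightarrow> ?G q p" for p q using sg unfolding simple_graph_def by blast
  show "\<not> chords_cross a b c d" if "?G a b" "?G c d" for a b c d
  proof -
    have "\<not> chords_cross (f (h a)) (f (h b)) (f (h c)) (f (h d))"
      using emb that unfolding circle_embedding_def by blast
    then show ?thesis using that f_h by simp
  qed
  show "\<exists>a b. ?G a b \<and> chords_cross p q a b"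
    if pq: "p < ?n" "q < ?n" "p \<noteq> q" "\<not> ?G p q" for p q
  proof (rule ccontr)
    assume uncrossed: "\<nexists>a b. ?G a b \<and> chords_cross p q a b"
    have "h p \<noteq> h q" using pq f_h by metis
    moreover have "\<not> E (h p) (h q)" using pq by simp
    ultimately have "\<not> outerplanar V (add_edge E (h p) (h q))"
      using mo h_in pq unfolding maximal_outerplanar_def by blast
    moreover have "simple_graph V (add_edge E (h p) (h q))"
      using sg h_in[OF pq(1)] h_in[OF pq(2)] \<open>h p \<noteq> h q\<close>
      unfolding simple_graph_def add_edge_def by auto
    moreover have "circle_embedding V (add_edge E (h p) (h q)) f"
    proof (rule circle_embedding_add_edge[OF sg emb])
      show "\<not> chords_cross (f (h p)) (f (h q)) (f a) (f b)" if "E a b" for a b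
        using uncrossed G_f[OF that] f_h pq by auto
    qed
    ultimately show False unfolding outerplanar_iff by blast
  qed
qed

locale graph_isomorphism =
  fixes h :: "'b \<Rightarrow> 'a" and A :: "'b set" and G :: "'b \<Rightarrow> 'b \<Rightarrow> bool"
    and V :: "'a set" and E :: "'a \<Rightarrow> 'a \<Rightarrow> bool"
  assumes bij: "bij_betw h A V"
    and adj: "\<And>p q. p \<in> A \<Longrightarrow> q \<in> A \<Longrightarrow> G p q \<longleftrightarrow> E (h p) (h q)"
begin

lemma closed_neighbourhood_card_bij:
  assumes "D \<subseteq> A" "p \<in> A"
  shows "card {w \<in> h ` D. w = h p \<or> E (h p) w} = card {u \<in> D. u = p \<or> G p u}"
proof -
  have inj: "inj_on h A" using bij by (rule bij_betw_imp_inj_on)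
  have "{w \<in> h ` D. w = h p \<or> E (h p) w} = h ` {u \<in> D. u = p \<or> G p u}"
    using assms adj inj_onD[OF inj] by blast
  moreover have "inj_on h {u \<in> D. u = p \<or> G p u}"
    by (rule inj_on_subset[OF inj]) (use assms(1) in auto)
  ultimately show ?thesis by (simp add: card_image)
qed

lemma degree_bij: "p \<in> A \<Longrightarrow> degree V E (h p) = degree A G p"
proof -
  assume p: "p \<in> A"
  have "{w \<in> V. E (h p) w} = h ` {q \<in> A. G p q}"
    using bij adj p unfolding bij_betw_def by auto
  moreover have "inj_on h {q \<in> A. G p q}"
    using bij_betw_imp_inj_on[OF bij] by (rule inj_on_subset) auto
  ultimately show ?thesis unfolding degree_def by (simp add: card_image)
qed

lemma degree_filter_bij: "{v \<in> V. P (degree V E v)} = h ` {p \<in> A. P (degree A G p)}"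
  using bij degree_bij unfolding bij_betw_def by auto

lemma card_degree_filter_bij: "card {v \<in> V. P (degree V E v)} = card {p \<in> A. P (degree A G p)}"
proof -
  have "inj_on h {p \<in> A. P (degree A G p)}"
    using bij_betw_imp_inj_on[OF bij] by (rule inj_on_subset) auto
  then show ?thesis unfolding degree_filter_bij by (rule card_image)
qed

lemma double_dominating_bij:
  assumes "double_dominating A G D"
  shows "double_dominating V E (h ` D)" and "card (h ` D) = card D"
proof -
  have D: "D \<subseteq> A" using assms unfolding double_dominating_def by blast
  have "2 \<le> card {w \<in> h ` D. w = v \<or> E v w}" if "v \<in> V" for v
  proof -
    obtain p where "p \<in> A" "v = h p" using bij \<open>v \<in> V\<close> unfolding bij_betw_def by auto
    then show ?thesis
      using closed_neighbourhood_card_bij[OF D] assms unfolding double_dominating_def by auto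
  qed
  then show "double_dominating V E (h ` D)"
    using D bij unfolding double_dominating_def bij_betw_def by auto
  show "card (h ` D) = card D"
    using inj_on_subset[OF bij_betw_imp_inj_on[OF bij] D] by (rule card_image)
qed

end

lemma polygon_at_vertex:
  assumes mo: "maximal_outerplanar V E" and "v \<in> V"
  obtains h G where "triangulated_polygon (card V) G" "graph_isomorphism h {..<card V} G V E" "h 0 = v"
proof -
  have sg: "simple_graph V E" and "\<exists>f. circle_embedding V E f"
    using mo unfolding maximal_outerplanar_def outerplanar_iff by auto
  then obtain g where g: "circle_embedding V E g" "g v = 0"
    using circle_embedding_at_vertex[OF sg _ \<open>v \<in> V\<close>] by blast
  have "bij_betw (inv_into V g) {..<card V} V"
    using g(1) bij_betw_inv_into unfolding circle_embedding_def atLeast0LessThan by blast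
  moreover have "inv_into V g 0 = v"
    using g \<open>v \<in> V\<close> unfolding circle_embedding_def bij_betw_def by (metis inv_into_f_f)
  ultimately show ?thesis
    using that[OF maximal_outerplanar_polygon[OF mo g(1)]] unfolding graph_isomorphism_def by auto
qed

lemma double_domination_number_le:
  "double_dominating V E D \<Longrightarrow> double_domination_number V E \<le> card D"
  unfolding double_domination_number_def by (rule Least_le) blast

lemma maximal_outerplanar_ear_exists:
  assumes mo: "maximal_outerplanar V E" and "3 \<le> card V"
  obtains v where "v \<in> V" "degree V E v = 2"
proof -
  obtain v where "v \<in> V" using assms(2) by fastforce
  then obtain h G where "triangulated_polygon (card V) G" and iso: "graph_isomorphism h {..<card V} G V E"
    using polygon_at_vertex[OF mo] by blast
  then obtain p where "p < card V" "degree {..<card V} G p = 2"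
    using triangulated_polygon.ear_exists assms(2) by blast
  then show ?thesis
    using that[of "h p"] graph_isomorphism.degree_bij[OF iso] iso
    unfolding graph_isomorphism_def bij_betw_def by auto
qed

lemma double_domination_number_le_ears:
  assumes mo: "maximal_outerplanar V E" and n4: "4 \<le> card V"
  shows "2 * double_domination_number V E \<le> card V + card {v \<in> V. degree V E v = 2}"
proof -
  have "3 \<le> card V" using n4 by simp
  then obtain v where "v \<in> V" "degree V E v = 2"
    using maximal_outerplanar_ear_exists[OF mo] by blast
  then obtain h G where poly: "triangulated_polygon (card V) G"
      and iso: "graph_isomorphism h {..<card V} G V E" and "h 0 = v"
    using polygon_at_vertex[OF mo \<open>v \<in> V\<close>] by blast
  interpret graph_isomorphism h "{..<card V}" G V E by (fact iso)
  have "degree {..<card V} G 0 = 2"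
    using degree_bij[of 0] \<open>h 0 = v\<close> \<open>degree V E v = 2\<close> n4 by simp
  then obtain D where D: "double_dominating {..<card V} G D"
      "2 * card D \<le> card V + card {p \<in> {..<card V}. degree {..<card V} G p = 2}"
    using triangulated_polygon.double_dominating_from_ear[OF poly n4] by blast
  have "double_domination_number V E \<le> card D"
    using double_domination_number_le[OF double_dominating_bij(1)[OF D(1)]]
      double_dominating_bij(2)[OF D(1)] by simp
  then show ?thesis using D(2) card_degree_filter_bij[of "\<lambda>d. d = 2"] by simp
qed

lemma double_domination_number_le_non_ears:
  assumes mo: "maximal_outerplanar V E" and n4: "4 \<le> card V"
  shows "double_domination_number V E \<le> card V - card {v \<in> V. degree V E v = 2}"
proof -
  let ?N = "{v \<in> V. degree V E v \<noteq> 2}"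
  have "2 \<le> card {w \<in> ?N. w = v \<or> E v w}" if "v \<in> V" for v
  proof -
    obtain h G where poly: "triangulated_polygon (card V) G"
        and iso: "graph_isomorphism h {..<card V} G V E" and "h 0 = v"
      using polygon_at_vertex[OF mo \<open>v \<in> V\<close>] by blast
    interpret graph_isomorphism h "{..<card V}" G V E by (fact iso)
    let ?M = "{p \<in> {..<card V}. degree {..<card V} G p \<noteq> 2}"
    have "card {w \<in> h ` ?M. w = h 0 \<or> E (h 0) w} = card {u \<in> ?M. u = 0 \<or> G 0 u}"
      by (rule closed_neighbourhood_card_bij) (use n4 in auto)
    then show ?thesis
      using triangulated_polygon.non_ears_dominate_0[OF poly n4] \<open>h 0 = v\<close>
        degree_filter_bij[of "\<lambda>d. d \<noteq> 2"]
      by simp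
  qed
  then have "double_dominating V E ?N" unfolding double_dominating_def by auto
  moreover have "card ?N = card V - card {v \<in> V. degree V E v = 2}"
  proof -
    have "finite V" using mo unfolding maximal_outerplanar_def outerplanar_def simple_graph_def by blast
    moreover have "?N = V - {v \<in> V. degree V E v = 2}" by auto
    ultimately show ?thesis by (simp add: card_Diff_subset)
  qed
  ultimately show ?thesis using double_domination_number_le by metis
qed

theorem corollary3p7:
  fixes V :: "'a set" and E :: "'a \<Rightarrow> 'a \<Rightarrow> bool"
  assumes "maximal_outerplanar V E"
    and "card V \<ge> 4"
  defines "n \<equiv> card V"
    and "t \<equiv> card {v \<in> V. degree V E v = 2}"
  shows "(real t < real n / 3 \<longrightarrow> double_domination_number V E \<le> (n + t) div 2)
       \<and> (\<not> (real t < real n / 3) \<longrightarrow> double_domination_number V E \<le> n - t)"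
proof -
  have "2 * double_domination_number V E \<le> n + t"
    using double_domination_number_le_ears[OF assms(1,2)] unfolding n_def t_def .
  then have "double_domination_number V E \<le> (n + t) div 2"
    using div_le_mono[of _ "n + t" 2] by fastforce
  moreover have "double_domination_number V E \<le> n - t"
    using double_domination_number_le_non_ears[OF assms(1,2)] unfolding n_def t_def .
  ultimately show ?thesis by blast
qed

end
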